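(* Let $q=AB$ be a two-atom query over $R$ satisfying the standing assumption below, such that $\mathrm{vars}(A)\cap\mathrm{vars}(B)\subseteq\mathrm{key}(B)$ or $\mathrm{key}(A)\subseteq\mathrm{key}(B)$. Then $q$ satisfies the zig-zag property: for every database $D$ and all facts $a,b,b',c$ of $D$ with $a\not\sim c$, $a\ne b$ and $b\sim b'$, if $D\models q(ab)$ and $D\models q(cb')$ then $D\models q(ab')$.
   Context: $R$ is a relation symbol of arity $k\ge1$ whose first $l$ positions form its primary key. Atoms are $R(\bar x)$ ($\bar x$ a tuple of variables), facts $R(\bar a)$ ($\bar a$ a tuple of elements). $\mathrm{vars}(A)$: variables of $A$; $\overline{\mathrm{key}}(t)$: tuple of first $l$ entries of $t$; $\mathrm{key}(t)$: set of those entries. $a\sim b$ iff $\overline{\mathrm{key}}(a)=\overline{\mathrm{key}}(b)$. A database is a finite set of facts. $D\models q(ab)$ means there is a mapping $\mu$ of variables to elements with $\mu(A)=a$, $\mu(B)=b$ and $a,b\in D$. Standing assumption: $\overline{\mathrm{key}}(A)\ne\overline{\mathrm{key}}(B)$ and $q$ is not equivalent over all consistent databases to a single-atom query. *)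

theory Defs
  imports Main
begin

text \<open>Atoms R(x) are lists of variables of length k, facts R(a) are lists of
elements of length k; the primary key consists of the first l positions.\<close>

definition keyt :: "nat \<Rightarrow> 'a list \<Rightarrow> 'a list" where
  "keyt l t = take l t"

definition keys :: "nat \<Rightarrow> 'a list \<Rightarrow> 'a set" where
  "keys l t = set (take l t)"

definition key_equal :: "nat \<Rightarrow> 'a list \<Rightarrow> 'a list \<Rightarrow> bool" where
  "key_equal l a b \<longleftrightarrow> keyt l a = keyt l b"

definition is_database :: "nat \<Rightarrow> 'c list set \<Rightarrow> bool" where
  "is_database k D \<longleftrightarrow> finite D \<and> (\<forall>f\<in>D. length f = k)"

definition consistent :: "nat \<Rightarrow> 'c list set \<Rightarrow> bool" where
  "consistent l D \<longleftrightarrow> (\<forall>f\<in>D. \<forall>g\<in>D. key_equal l f g \<longrightarrow> f = g)"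

definition sat_q_on :: "'c list set \<Rightarrow> 'v list \<Rightarrow> 'v list \<Rightarrow> 'c list \<Rightarrow> 'c list \<Rightarrow> bool" where
  "sat_q_on D A B a b \<longleftrightarrow> (\<exists>\<mu>. map \<mu> A = a \<and> map \<mu> B = b \<and> a \<in> D \<and> b \<in> D)"

definition sat_q :: "'c list set \<Rightarrow> 'v list \<Rightarrow> 'v list \<Rightarrow> bool" where
  "sat_q D A B \<longleftrightarrow> (\<exists>\<mu>. map \<mu> A \<in> D \<and> map \<mu> B \<in> D)"

definition sat_atom :: "'c list set \<Rightarrow> 'w list \<Rightarrow> bool" where
  "sat_atom D C \<longleftrightarrow> (\<exists>\<mu>. map \<mu> C \<in> D)"

text \<open>q = AB is equivalent, over all consistent databases (over the countably
infinite domain nat), to some single-atom query R(C) (variables taken from nat).\<close>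
definition equiv_single_atom :: "nat \<Rightarrow> nat \<Rightarrow> 'v list \<Rightarrow> 'v list \<Rightarrow> bool" where
  "equiv_single_atom k l A B \<longleftrightarrow>
     (\<exists>C :: nat list. length C = k \<and>
        (\<forall>D :: nat list set. is_database k D \<and> consistent l D \<longrightarrow>
            (sat_q D A B \<longleftrightarrow> sat_atom D C)))"

definition standing_assumption :: "nat \<Rightarrow> nat \<Rightarrow> 'v list \<Rightarrow> 'v list \<Rightarrow> bool" where
  "standing_assumption k l A B \<longleftrightarrow> keyt l A \<noteq> keyt l B \<and> \<not> equiv_single_atom k l A B"

definition zigzag_on :: "nat \<Rightarrow> 'v list \<Rightarrow> 'v list \<Rightarrow> 'c list set \<Rightarrow> bool" where
  "zigzag_on l A B D \<longleftrightarrow>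
     (\<forall>a\<in>D. \<forall>b\<in>D. \<forall>b'\<in>D. \<forall>c\<in>D.
        \<not> key_equal l a c \<and> a \<noteq> b \<and> key_equal l b b' \<and>
        sat_q_on D A B a b \<and> sat_q_on D A B c b' \<longrightarrow> sat_q_on D A B a b')"

end

theory Submission
  imports Defs
begin

text \<open>Let \<mu> witness q(ab) and \<nu> witness q(cb'). As b \<sim> b', the valuations
\<mu> and \<nu> agree on key(B). If the variables shared by A and B lie in key(B), then
\<mu> on A glued with \<nu> on B witnesses q(ab'). If key(A) \<subseteq> key(B), then \<mu> and \<nu>
agree on key(A), so a \<sim> c and the zig-zag property holds vacuously.\<close>

lemma key_equal_map_iff:
  "key_equal l (map \<mu> X) (map \<nu> X) \<longleftrightarrow> (\<forall>x\<in>keys l X. \<mu> x = \<nu> x)"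
  by (simp add: key_equal_def keyt_def keys_def take_map)

lemma witnesses_agree_on_key:
  assumes "sat_q_on D A B a b" and "sat_q_on D A B c b'" and "key_equal l b b'"
  obtains \<mu> \<nu> where "map \<mu> A = a" and "map \<mu> B = b"
    and "map \<nu> A = c" and "map \<nu> B = b'" and "\<forall>x\<in>keys l B. \<mu> x = \<nu> x"
  using assms key_equal_map_iff unfolding sat_q_on_def by metis

lemma glue_valuations:
  assumes "\<forall>x\<in>set A \<inter> set B. \<mu> x = \<nu> x"
  obtains \<theta> where "map \<theta> A = map \<mu> A" and "map \<theta> B = map \<nu> B"
proof
  let ?\<theta> = "\<lambda>x. if x \<in> set A then \<mu> x else \<nu> x"
  show "map ?\<theta> A = map \<mu> A" by simp
  show "map ?\<theta> B = map \<nu> B" using assms by (auto intro: map_cong)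
qed

lemma zigzag_on_if_shared_vars_in_key:
  assumes "set A \<inter> set B \<subseteq> keys l B"
  shows "zigzag_on l A B D"
  unfolding zigzag_on_def
proof (intro ballI impI)
  fix a b b' c
  assume "a \<in> D" "b' \<in> D"
    and H: "\<not> key_equal l a c \<and> a \<noteq> b \<and> key_equal l b b' \<and>
        sat_q_on D A B a b \<and> sat_q_on D A B c b'"
  obtain \<mu> \<nu> where \<mu>: "map \<mu> A = a" "map \<mu> B = b"
    and \<nu>: "map \<nu> A = c" "map \<nu> B = b'" and "\<forall>x\<in>keys l B. \<mu> x = \<nu> x"
    using H by (blast elim: witnesses_agree_on_key)
  with assms obtain \<theta> where "map \<theta> A = a" "map \<theta> B = b'"
    using \<mu> \<nu> glue_valuations[of A B \<mu> \<nu>] by blast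
  with \<open>a \<in> D\<close> \<open>b' \<in> D\<close> show "sat_q_on D A B a b'"
    unfolding sat_q_on_def by blast
qed

lemma zigzag_on_if_key_subset:
  assumes "keys l A \<subseteq> keys l B"
  shows "zigzag_on l A B D"
  unfolding zigzag_on_def
proof (intro ballI impI)
  fix a b b' c
  assume H: "\<not> key_equal l a c \<and> a \<noteq> b \<and> key_equal l b b' \<and>
        sat_q_on D A B a b \<and> sat_q_on D A B c b'"
  obtain \<mu> \<nu> where \<mu>: "map \<mu> A = a" "map \<mu> B = b"
    and \<nu>: "map \<nu> A = c" "map \<nu> B = b'" and "\<forall>x\<in>keys l B. \<mu> x = \<nu> x"
    using H by (blast elim: witnesses_agree_on_key)
  with assms have "key_equal l a c"
    using \<mu> \<nu> key_equal_map_iff by (metis subsetD)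
  with H show "sat_q_on D A B a b'" by blast
qed

theorem lemma6p2:
  fixes A B :: "'v list" and D :: "'c list set" and k l :: nat
  assumes "1 \<le> k" and "l \<le> k"
    and "length A = k" and "length B = k"
    and "standing_assumption k l A B"
    and "set A \<inter> set B \<subseteq> keys l B \<or> keys l A \<subseteq> keys l B"
    and "is_database k D"
  shows "zigzag_on l A B D"
  using assms(6) zigzag_on_if_shared_vars_in_key zigzag_on_if_key_subset by blast

end
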